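(* Work in the max-plus semifield $(\mathbb{R}\cup\{-\infty\},\oplus=\max,\otimes=+,\mathbb{0}=-\infty,\mathbb{1}=0)$. Let $m\geq1$, let $p_{1j},p_{2j}\in\mathbb{R}$, $w_{j}>0$, $d_{j}>0$, $h_{j}\in\mathbb{R}$ for $j=1,\ldots,m$, and let $f_{1}\leq g_{1}$, $f_{2}\leq g_{2}$, $a\leq b$ be reals. Consider the problem of minimizing over $(x_{1},x_{2})^{T}\in\mathbb{R}^{2}$ $$\max_{1\leq j\leq m}\big(w_{j}(|x_{1}-p_{1j}|+|x_{2}-p_{2j}|)+h_{j}\big)$$ subject to $|x_{1}-p_{1j}|+|x_{2}-p_{2j}|\leq d_{j}$ ($j=1,\ldots,m$), $f_{1}-x_{2}\leq x_{1}\leq g_{1}-x_{2}$, $f_{2}+x_{1}\leq x_{2}\leq g_{2}+x_{1}$, and $a\leq x_{1}\leq b$. In max-plus notation, let $\bm{o}_{j}=(o_{1j},o_{2j})^{T}$ with $o_{1j}=p_{1j}p_{2j}$, $o_{2j}=p_{1j}^{-1}p_{2j}$; let $\bm{f}=(f_{1},f_{2})^{T}$, $\bm{g}=(g_{1},g_{2})^{T}$, $$\bm{B}=\begin{pmatrix}\mathbb{0}&a^{2}\\ b^{-2}&\mathbb{0}\end{pmatrix},\qquad \bm{B}^{\ast}=\begin{pmatrix}\mathbb{1}&a^{2}\\ b^{-2}&\mathbb{1}\end{pmatrix};$$ $$\bm{s}=\bigoplus_{1\leq j\leq m}d_{j}^{-1}\bm{o}_{j}\oplus\bm{f},\qquad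 \bm{t}^{-}=\bigoplus_{1\leq j\leq m}d_{j}^{-1}\bm{o}_{j}^{-}\oplus\bm{g}^{-}.$$ Suppose $\bm{t}^{-}\bm{B}^{\ast}\bm{s}\leq\mathbb{1}$. Then the minimum value of the problem is $$\theta=\bigoplus_{1\leq j,l\leq m}\left(h_{j}^{\frac{w_{l}}{w_{j}+w_{l}}}h_{l}^{\frac{w_{j}}{w_{j}+w_{l}}}(\bm{o}_{j}^{-}\bm{B}^{\ast}\bm{o}_{l})^{\frac{w_{j}w_{l}}{w_{j}+w_{l}}}\oplus h_{j}(\bm{o}_{j}^{-}\bm{B}^{\ast}\bm{s})^{w_{j}}\oplus h_{l}(\bm{t}^{-}\bm{B}^{\ast}\bm{o}_{l})^{w_{l}}\right),$$ and, with $$\bm{q}=\bigoplus_{1\leq j\leq m}\theta^{-1/w_{j}}h_{j}^{1/w_{j}}\bm{o}_{j},\qquad \bm{r}^{-}=\bigoplus_{1\leq j\leq m}\theta^{-1/w_{j}}h_{j}^{1/w_{j}}\bm{o}_{j}^{-},$$ all solution vectors $\bm{x}=(x_{1},x_{2})^{T}$ have entries $x_{1}=y_{1}^{1/2}y_{2}^{-1/2}$, $x_{2}=y_{1}^{1/2}y_{2}^{1/2}$, where $\bm{y}=(y_{1},y_{2})^{T}=\bm{B}^{\ast}\bm{u}$ and the parameter vector $\bm{u}$ satisfies $\bm{q}\oplus\bm{s}\leq\bm{u}\leq((\bm{r}^{-}\oplus\bm{t}^{-})\bm{B}^{\ast})^{-}$.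
   Context: In the max-plus semifield, the product $xy$ means $x+y$, $x^{-1}=-x$, the power $x^{p}$ means $px$ for real $p$, and the order is the usual order of reals. Matrix and vector operations use $\max$ in place of addition and $+$ in place of multiplication; inequalities between vectors are componentwise. For a column vector $\bm{x}=(x_{i})$ with real entries, $\bm{x}^{-}$ is the row vector $(-x_{i})$ (and for a row vector, the column vector of negated entries). $\mathbb{0}=-\infty$ and $\mathbb{1}=0$. *)

theory Defs
  imports Complex_Main
begin

text \<open>Max-plus algebra on vectors of dimension 2 with real (finite) entries,
  represented as pairs. Column and row vectors are both pairs; which one is meant
  is fixed by the operation applied.\<close>

type_synonym vec2 = "real \<times> real"

definition mp_add :: "vec2 \<Rightarrow> vec2 \<Rightarrow> vec2" (infixl "\<oplus>\<^sub>v" 65) where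
  "x \<oplus>\<^sub>v y = (max (fst x) (fst y), max (snd x) (snd y))"

definition mp_scal :: "real \<Rightarrow> vec2 \<Rightarrow> vec2" where
  "mp_scal c x = (c + fst x, c + snd x)"

definition mp_conj :: "vec2 \<Rightarrow> vec2" where
  "mp_conj x = (- fst x, - snd x)"

definition mp_inner :: "vec2 \<Rightarrow> vec2 \<Rightarrow> real" where
  "mp_inner r x = max (fst r + fst x) (snd r + snd x)"

definition mp_bigadd :: "nat \<Rightarrow> (nat \<Rightarrow> vec2) \<Rightarrow> vec2" where
  "mp_bigadd m F = (Max ((\<lambda>j. fst (F j)) ` {1..m}), Max ((\<lambda>j. snd (F j)) ` {1..m}))"

text \<open>The matrix B* = [[1, a^2], [b^-2, 1]] (max-plus), i.e. entries
  [[0, 2a], [-2b, 0]] in ordinary notation, given by its entries (indices 1,2).\<close>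
definition Bstar :: "real \<Rightarrow> real \<Rightarrow> nat \<Rightarrow> nat \<Rightarrow> real" where
  "Bstar a b i k = (if i = 1 \<and> k = 1 then 0 else if i = 1 \<and> k = 2 then 2 * a
                    else if i = 2 \<and> k = 1 then - 2 * b else 0)"

definition mat_col :: "(nat \<Rightarrow> nat \<Rightarrow> real) \<Rightarrow> vec2 \<Rightarrow> vec2" where
  "mat_col A x = (max (A 1 1 + fst x) (A 1 2 + snd x), max (A 2 1 + fst x) (A 2 2 + snd x))"

definition row_mat :: "vec2 \<Rightarrow> (nat \<Rightarrow> nat \<Rightarrow> real) \<Rightarrow> vec2" where
  "row_mat r A = (max (fst r + A 1 1) (snd r + A 2 1), max (fst r + A 1 2) (snd r + A 2 2))"

definition vle :: "vec2 \<Rightarrow> vec2 \<Rightarrow> bool" where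
  "vle x y \<longleftrightarrow> fst x \<le> fst y \<and> snd x \<le> snd y"

definition objective :: "nat \<Rightarrow> (nat \<Rightarrow> real) \<Rightarrow> (nat \<Rightarrow> real) \<Rightarrow> (nat \<Rightarrow> real) \<Rightarrow> (nat \<Rightarrow> real)
    \<Rightarrow> real \<times> real \<Rightarrow> real" where
  "objective m p1 p2 w h x =
     Max ((\<lambda>j. w j * (\<bar>fst x - p1 j\<bar> + \<bar>snd x - p2 j\<bar>) + h j) ` {1..m})"

definition feasible :: "nat \<Rightarrow> (nat \<Rightarrow> real) \<Rightarrow> (nat \<Rightarrow> real) \<Rightarrow> (nat \<Rightarrow> real)
    \<Rightarrow> real \<Rightarrow> real \<Rightarrow> real \<Rightarrow> real \<Rightarrow> real \<Rightarrow> real \<Rightarrow> (real \<times> real) set" where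
  "feasible m p1 p2 d f1 g1 f2 g2 a b =
     {x. (\<forall>j\<in>{1..m}. \<bar>fst x - p1 j\<bar> + \<bar>snd x - p2 j\<bar> \<le> d j)
         \<and> f1 - snd x \<le> fst x \<and> fst x \<le> g1 - snd x
         \<and> f2 + fst x \<le> snd x \<and> snd x \<le> g2 + fst x
         \<and> a \<le> fst x \<and> fst x \<le> b}"

end

theory Submission
  imports Defs
begin

(* In the rotated coordinates y = (x1 x2, x1^-1 x2), i.e. y = (x1 + x2, x2 - x1), the rectilinear
   distance becomes the Chebyshev distance. Hence, for every level t, the points that are feasible
   and have objective value at most t are exactly the rotations of the solutions y of a two-sided
   system  L(t) <= y <= V(t)^-,  B* y = y,  where the last equation encodes a <= x1 <= b.
   Because B* is idempotent and above the identity, such a system is solvable iff V(t) B* L(t) <= 1,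
   and its solutions are the vectors B* u with L(t) <= u and V(t) B* u <= 1. Expanding V(t) B* L(t) <= 1
   term by term gives exactly theta <= t, so theta is the least level with a nonempty sublevel set,
   i.e. the attained minimum, and the optimal set is the solution set at level theta. *)

lemma vle_trans: "vle x y \<Longrightarrow> vle y z \<Longrightarrow> vle x z"
  by (auto simp: vle_def)

lemma mp_conj_mp_conj [simp]: "mp_conj (mp_conj x) = x"
  by (simp add: mp_conj_def)

lemma vle_mp_add_iff: "vle (x \<oplus>\<^sub>v y) z \<longleftrightarrow> vle x z \<and> vle y z"
  by (auto simp: vle_def mp_add_def)

lemma vle_mp_conj_mp_add_iff:
  "vle z (mp_conj (x \<oplus>\<^sub>v y)) \<longleftrightarrow> vle z (mp_conj x) \<and> vle z (mp_conj y)"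
  by (auto simp: vle_def mp_add_def mp_conj_def)

lemma vle_mp_bigadd_iff: "m \<ge> 1 \<Longrightarrow> vle (mp_bigadd m F) z \<longleftrightarrow> (\<forall>j\<in>{1..m}. vle (F j) z)"
  by (auto simp: vle_def mp_bigadd_def)

lemma vle_mp_conj_mp_bigadd_iff:
  assumes "m \<ge> 1"
  shows "vle z (mp_conj (mp_bigadd m F)) \<longleftrightarrow> (\<forall>j\<in>{1..m}. vle z (mp_conj (F j)))"
proof -
  have "vle z (mp_conj (mp_bigadd m F)) \<longleftrightarrow>
      Max ((\<lambda>j. fst (F j)) ` {1..m}) \<le> - fst z \<and> Max ((\<lambda>j. snd (F j)) ` {1..m}) \<le> - snd z"
    by (auto simp: vle_def mp_bigadd_def mp_conj_def)
  also have "\<dots> \<longleftrightarrow> (\<forall>j\<in>{1..m}. vle z (mp_conj (F j)))"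
    using assms by (auto simp: vle_def mp_conj_def)
  finally show ?thesis .
qed

lemma mp_inner_le_0_iff: "mp_inner r x \<le> 0 \<longleftrightarrow> vle x (mp_conj r)"
  by (auto simp: mp_inner_def vle_def mp_conj_def)

lemma mp_inner_mat_col: "mp_inner r (mat_col A x) = mp_inner (row_mat r A) x"
  by (simp add: mp_inner_def mat_col_def row_mat_def max_add_distrib_left max_add_distrib_right
      algebra_simps max.assoc max.left_commute)

lemma mp_inner_mp_scal_left_le_iff: "mp_inner (mp_scal k r) x \<le> c \<longleftrightarrow> mp_inner r x \<le> c - k"
  by (auto simp: mp_inner_def mp_scal_def)

lemma mp_inner_mat_col_mp_scal_le_iff:
  "mp_inner r (mat_col A (mp_scal k x)) \<le> c \<longleftrightarrow> mp_inner r (mat_col A x) \<le> c - k"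
  by (auto simp: mp_inner_def mat_col_def mp_scal_def)

lemma mat_col_mono: "vle x y \<Longrightarrow> vle (mat_col A x) (mat_col A y)"
  by (auto simp: vle_def mat_col_def intro: max.mono)

lemma mp_inner_le_iff: "mp_inner x z \<le> c \<longleftrightarrow> fst x \<le> c - fst z \<and> snd x \<le> c - snd z"
  by (auto simp: mp_inner_def)

lemma mp_inner_mat_col_le_iff:
  "mp_inner x (mat_col A y) \<le> c \<longleftrightarrow>
    fst y \<le> c - fst x - A 1 1 \<and> fst y \<le> c - snd x - A 2 1 \<and>
    snd y \<le> c - fst x - A 1 2 \<and> snd y \<le> c - snd x - A 2 2"
  by (auto simp: mp_inner_def mat_col_def)

lemma mp_inner_mp_add_left_le_iff:
  "mp_inner (x \<oplus>\<^sub>v y) z \<le> c \<longleftrightarrow> mp_inner x z \<le> c \<and> mp_inner y z \<le> c"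
  by (auto simp: mp_inner_le_iff mp_add_def)

lemma mp_inner_mat_col_mp_add_le_iff:
  "mp_inner x (mat_col A (y \<oplus>\<^sub>v z)) \<le> c \<longleftrightarrow>
    mp_inner x (mat_col A y) \<le> c \<and> mp_inner x (mat_col A z) \<le> c"
  by (auto simp: mp_inner_mat_col_le_iff mp_add_def)

lemma mp_inner_mp_bigadd_left_le_iff:
  "m \<ge> 1 \<Longrightarrow> mp_inner (mp_bigadd m F) z \<le> c \<longleftrightarrow> (\<forall>j\<in>{1..m}. mp_inner (F j) z \<le> c)"
  by (auto simp: mp_inner_le_iff mp_bigadd_def)

lemma mp_inner_mat_col_mp_bigadd_le_iff:
  "m \<ge> 1 \<Longrightarrow> mp_inner x (mat_col A (mp_bigadd m F)) \<le> c \<longleftrightarrow>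
    (\<forall>j\<in>{1..m}. mp_inner x (mat_col A (F j)) \<le> c)"
  by (auto simp: mp_inner_mat_col_le_iff mp_bigadd_def)

(* In max-plus terms: I <= A and A A = A, i.e. A is its own Kleene star. *)
definition is_kleene_star :: "(nat \<Rightarrow> nat \<Rightarrow> real) \<Rightarrow> bool" where
  "is_kleene_star A \<longleftrightarrow> A 1 1 = 0 \<and> A 2 2 = 0 \<and> A 1 2 + A 2 1 \<le> 0"

lemma Bstar_is_kleene_star: "a \<le> b \<Longrightarrow> is_kleene_star (Bstar a b)"
  by (simp add: is_kleene_star_def Bstar_def)

lemma kleene_star_vle_mat_col: "is_kleene_star A \<Longrightarrow> vle x (mat_col A x)"
  by (simp add: is_kleene_star_def vle_def mat_col_def)

lemma kleene_star_mat_col_idem: "is_kleene_star A \<Longrightarrow> mat_col A (mat_col A x) = mat_col A x"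
  by (auto simp: is_kleene_star_def mat_col_def max_def)

lemma kleene_star_fixpoint_exists_iff:
  assumes "is_kleene_star A"
  shows "(\<exists>y. vle L y \<and> vle y (mp_conj V) \<and> mat_col A y = y) \<longleftrightarrow> mp_inner V (mat_col A L) \<le> 0"
proof
  assume "\<exists>y. vle L y \<and> vle y (mp_conj V) \<and> mat_col A y = y"
  then obtain y where "vle L y" "vle y (mp_conj V)" "mat_col A y = y" by blast
  then have "vle (mat_col A L) (mp_conj V)" by (metis mat_col_mono vle_trans)
  then show "mp_inner V (mat_col A L) \<le> 0" by (simp add: mp_inner_le_0_iff)
next
  assume "mp_inner V (mat_col A L) \<le> 0"
  then have "vle L (mat_col A L) \<and> vle (mat_col A L) (mp_conj V) \<and> mat_col A (mat_col A L) = mat_col A L"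
    using assms by (simp add: mp_inner_le_0_iff kleene_star_vle_mat_col kleene_star_mat_col_idem)
  then show "\<exists>y. vle L y \<and> vle y (mp_conj V) \<and> mat_col A y = y" by blast
qed

lemma kleene_star_fixpoint_iff:
  assumes "is_kleene_star A"
  shows "vle L y \<and> vle y (mp_conj V) \<and> mat_col A y = y \<longleftrightarrow>
    (\<exists>u. vle L u \<and> vle u (mp_conj (row_mat V A)) \<and> y = mat_col A u)"
proof -
  have residual: "vle u (mp_conj (row_mat V A)) \<longleftrightarrow> vle (mat_col A u) (mp_conj V)" for u
    by (simp add: mp_inner_le_0_iff[symmetric] mp_inner_mat_col)
  show ?thesis
  proof
    assume "vle L y \<and> vle y (mp_conj V) \<and> mat_col A y = y"
    then show "\<exists>u. vle L u \<and> vle u (mp_conj (row_mat V A)) \<and> y = mat_col A u"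
      using residual by metis
  next
    assume "\<exists>u. vle L u \<and> vle u (mp_conj (row_mat V A)) \<and> y = mat_col A u"
    then obtain u where u: "vle L u" "vle u (mp_conj (row_mat V A))" and y: "y = mat_col A u"
      by blast
    have "vle L y"
      using u(1) kleene_star_vle_mat_col[OF assms] y by (metis vle_trans)
    moreover have "vle y (mp_conj V)"
      using u(2) residual y by blast
    moreover have "mat_col A y = y"
      using kleene_star_mat_col_idem[OF assms] y by blast
    ultimately show "vle L y \<and> vle y (mp_conj V) \<and> mat_col A y = y" by blast
  qed
qed

definition rotate_coords :: "vec2 \<Rightarrow> vec2" where
  "rotate_coords x = (fst x + snd x, snd x - fst x)"

definition cheb_dist :: "vec2 \<Rightarrow> vec2 \<Rightarrow> real" where
  "cheb_dist x y = max \<bar>fst x - fst y\<bar> \<bar>snd x - snd y\<bar>"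

lemma l1_dist_eq_cheb_dist_rotate_coords:
  "\<bar>fst x - fst p\<bar> + \<bar>snd x - snd p\<bar> = cheb_dist (rotate_coords x) (rotate_coords p)"
  by (simp add: cheb_dist_def rotate_coords_def abs_if max_def)

lemma rotate_coords_eq_iff:
  "rotate_coords x = y \<longleftrightarrow>
    fst x = (1/2) * fst y + (- 1/2) * snd y \<and> snd x = (1/2) * fst y + (1/2) * snd y"
  by (cases x; cases y) (auto simp: rotate_coords_def field_simps)

lemma surj_rotate_coords: "surj rotate_coords"
proof (rule surjI)
  show "rotate_coords ((fst y - snd y) / 2, (fst y + snd y) / 2) = y" for y
    by (simp add: rotate_coords_eq_iff)
qed

lemma mp_box_iff_cheb_dist:
  "vle (mp_scal r p) y \<and> vle y (mp_conj (mp_scal r (mp_conj p))) \<longleftrightarrow> cheb_dist y p \<le> - r"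
  by (auto simp: vle_def mp_scal_def mp_conj_def cheb_dist_def abs_le_iff)

lemma mp_bigadd_box_iff_cheb_dist:
  assumes "m \<ge> 1"
  shows "vle (mp_bigadd m (\<lambda>j. mp_scal (r j) (p j))) y
      \<and> vle y (mp_conj (mp_bigadd m (\<lambda>j. mp_scal (r j) (mp_conj (p j)))))
    \<longleftrightarrow> (\<forall>j\<in>{1..m}. cheb_dist y (p j) \<le> - r j)"
  using assms by (auto simp: vle_mp_bigadd_iff vle_mp_conj_mp_bigadd_iff mp_box_iff_cheb_dist[symmetric])

lemma Bstar_fixpoint_iff:
  "mat_col (Bstar a b) y = y \<longleftrightarrow> 2 * a \<le> fst y - snd y \<and> fst y - snd y \<le> 2 * b"
  by (cases y) (auto simp: mat_col_def Bstar_def max_def)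

lemma le_iff_le_0_of_diff_eq_pos_mult:
  fixes k :: real
  assumes "k > 0" and "x - t = k * y"
  shows "x \<le> t \<longleftrightarrow> y \<le> 0"
proof -
  have "x \<le> t \<longleftrightarrow> k * y \<le> k * 0"
    by (simp flip: assms(2))
  also have "\<dots> \<longleftrightarrow> y \<le> 0"
    using assms(1) by (rule mult_le_cancel_left_pos)
  finally show ?thesis .
qed

lemma weighted_le_iff:
  fixes w :: real
  assumes "w > 0"
  shows "w * e + h \<le> t \<longleftrightarrow> (- 1 / w) * t + (1 / w) * h + e \<le> 0"
proof (rule le_iff_le_0_of_diff_eq_pos_mult[OF assms])
  show "w * e + h - t = w * ((- 1 / w) * t + (1 / w) * h + e)"
    using assms by (simp add: field_simps)
qed

lemma weighted_mean_le_iff: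
  fixes wj wl :: real
  assumes "wj > 0" "wl > 0"
  shows "(wl / (wj + wl)) * hj + (wj / (wj + wl)) * hl + (wj * wl / (wj + wl)) * c \<le> t \<longleftrightarrow>
    ((- 1 / wj) * t + (1 / wj) * hj) + ((- 1 / wl) * t + (1 / wl) * hl) + c \<le> 0"
proof (rule le_iff_le_0_of_diff_eq_pos_mult)
  show "wj * wl / (wj + wl) > 0"
    using assms by simp
  have "wj + wl \<noteq> 0"
    using assms by simp
  then show "(wl / (wj + wl)) * hj + (wj / (wj + wl)) * hl + (wj * wl / (wj + wl)) * c - t
      = (wj * wl / (wj + wl)) * (((- 1 / wj) * t + (1 / wj) * hj) + ((- 1 / wl) * t + (1 / wl) * hl) + c)"
    using assms by (simp add: divide_simps) (simp add: algebra_simps)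
qed

lemma sublevel_threshold_minimum:
  fixes obj :: "'a \<Rightarrow> 'b::linorder"
  assumes threshold: "\<And>t. (\<exists>x\<in>F. obj x \<le> t) \<longleftrightarrow> \<theta> \<le> t"
  shows "\<theta> \<in> obj ` F" and "\<forall>x\<in>F. \<theta> \<le> obj x" and "{x\<in>F. obj x = \<theta>} = {x\<in>F. obj x \<le> \<theta>}"
proof -
  show lower: "\<forall>x\<in>F. \<theta> \<le> obj x" using threshold by blast
  then show "{x\<in>F. obj x = \<theta>} = {x\<in>F. obj x \<le> \<theta>}" by force
  obtain x where "x \<in> F" "obj x \<le> \<theta>" using threshold by blast
  with lower show "\<theta> \<in> obj ` F" by force
qed

locale maxplus_location =
  fixes m :: nat and p1 p2 w d h :: "nat \<Rightarrow> real" and f1 g1 f2 g2 a b :: real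
  assumes m_ge_1: "m \<ge> 1" and w_pos: "\<forall>j\<in>{1..m}. w j > 0" and a_le_b: "a \<le> b"
begin

definition site :: "nat \<Rightarrow> vec2" where
  "site j = (p1 j + p2 j, - p1 j + p2 j)"

definition s :: vec2 where
  "s = mp_bigadd m (\<lambda>j. mp_scal (- d j) (site j)) \<oplus>\<^sub>v (f1, f2)"

definition tm :: vec2 where
  "tm = mp_bigadd m (\<lambda>j. mp_scal (- d j) (mp_conj (site j))) \<oplus>\<^sub>v mp_conj (g1, g2)"

(* The paper's scalar t^(-1/w_j) h_j^(1/w_j). *)
definition level :: "real \<Rightarrow> nat \<Rightarrow> real" where
  "level t j = (- 1 / w j) * t + (1 / w j) * h j"

definition lower :: "real \<Rightarrow> vec2" where
  "lower t = mp_bigadd m (\<lambda>j. mp_scal (level t j) (site j)) \<oplus>\<^sub>v s"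

definition upper :: "real \<Rightarrow> vec2" where
  "upper t = mp_bigadd m (\<lambda>j. mp_scal (level t j) (mp_conj (site j))) \<oplus>\<^sub>v tm"

definition level_solution :: "real \<Rightarrow> vec2 \<Rightarrow> bool" where
  "level_solution t y \<longleftrightarrow> vle (lower t) y \<and> vle y (mp_conj (upper t)) \<and> mat_col (Bstar a b) y = y"

definition \<theta> :: real where
  "\<theta> = Max ((\<lambda>(j, l).
      max (max ((w l / (w j + w l)) * h j + (w j / (w j + w l)) * h l
                + (w j * w l / (w j + w l)) * mp_inner (mp_conj (site j)) (mat_col (Bstar a b) (site l)))
               (h j + w j * mp_inner (mp_conj (site j)) (mat_col (Bstar a b) s)))
          (h l + w l * mp_inner tm (mat_col (Bstar a b) (site l))))
    ` ({1..m} \<times> {1..m}))"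

lemma site_eq_rotate_coords: "site j = rotate_coords (p1 j, p2 j)"
  by (simp add: site_def rotate_coords_def)

lemma sublevel_iff_level_solution:
  "x \<in> feasible m p1 p2 d f1 g1 f2 g2 a b \<and> objective m p1 p2 w h x \<le> t \<longleftrightarrow>
    level_solution t (rotate_coords x)"
proof -
  define y where "y = rotate_coords x"
  have dist: "\<bar>fst x - p1 j\<bar> + \<bar>snd x - p2 j\<bar> = cheb_dist y (site j)" for j
    using l1_dist_eq_cheb_dist_rotate_coords[of x "(p1 j, p2 j)"]
    by (simp add: y_def site_eq_rotate_coords)
  have "w j * cheb_dist y (site j) + h j \<le> t \<longleftrightarrow> cheb_dist y (site j) \<le> - level t j"
    if "j \<in> {1..m}" for j
    using weighted_le_iff[of "w j" "cheb_dist y (site j)" "h j" t] w_pos that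
    unfolding level_def by auto
  then have objective_le:
    "objective m p1 p2 w h x \<le> t \<longleftrightarrow> (\<forall>j\<in>{1..m}. cheb_dist y (site j) \<le> - level t j)"
    using m_ge_1 by (simp add: objective_def dist)
  have feasible: "x \<in> feasible m p1 p2 d f1 g1 f2 g2 a b \<longleftrightarrow>
      (\<forall>j\<in>{1..m}. cheb_dist y (site j) \<le> - (- d j)) \<and> vle (f1, f2) y \<and> vle y (mp_conj (mp_conj (g1, g2)))
      \<and> mat_col (Bstar a b) y = y"
    by (auto simp: feasible_def dist Bstar_fixpoint_iff vle_def y_def rotate_coords_def)
  show ?thesis
    unfolding y_def[symmetric] level_solution_def lower_def upper_def s_def tm_def objective_le feasible
      vle_mp_add_iff vle_mp_conj_mp_add_iff mp_bigadd_box_iff_cheb_dist[OF m_ge_1, symmetric]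
    by blast
qed

lemma upper_lower_le_0_iff:
  assumes "mp_inner tm (mat_col (Bstar a b) s) \<le> 0"
  shows "mp_inner (upper t) (mat_col (Bstar a b) (lower t)) \<le> 0 \<longleftrightarrow>
    (\<forall>j\<in>{1..m}. \<forall>l\<in>{1..m}.
        level t j + level t l + mp_inner (mp_conj (site j)) (mat_col (Bstar a b) (site l)) \<le> 0)
    \<and> (\<forall>j\<in>{1..m}. level t j + mp_inner (mp_conj (site j)) (mat_col (Bstar a b) s) \<le> 0)
    \<and> (\<forall>l\<in>{1..m}. level t l + mp_inner tm (mat_col (Bstar a b) (site l)) \<le> 0)"
  using assms m_ge_1 unfolding upper_def lower_def
  by (simp add: mp_inner_mp_add_left_le_iff mp_inner_mat_col_mp_add_le_iff
      mp_inner_mp_bigadd_left_le_iff mp_inner_mat_col_mp_bigadd_le_iff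
      mp_inner_mp_scal_left_le_iff mp_inner_mat_col_mp_scal_le_iff le_diff_eq add_ac)
    (smt (verit))

lemma theta_le_iff:
  "\<theta> \<le> t \<longleftrightarrow>
    (\<forall>j\<in>{1..m}. \<forall>l\<in>{1..m}.
        level t j + level t l + mp_inner (mp_conj (site j)) (mat_col (Bstar a b) (site l)) \<le> 0)
    \<and> (\<forall>j\<in>{1..m}. level t j + mp_inner (mp_conj (site j)) (mat_col (Bstar a b) s) \<le> 0)
    \<and> (\<forall>l\<in>{1..m}. level t l + mp_inner tm (mat_col (Bstar a b) (site l)) \<le> 0)"
proof -
  let ?B = "Bstar a b"
  have pair: "(w l / (w j + w l)) * h j + (w j / (w j + w l)) * h l
        + (w j * w l / (w j + w l)) * mp_inner (mp_conj (site j)) (mat_col ?B (site l)) \<le> t \<longleftrightarrow>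
      level t j + level t l + mp_inner (mp_conj (site j)) (mat_col ?B (site l)) \<le> 0"
    if "j \<in> {1..m}" "l \<in> {1..m}" for j l
    using weighted_mean_le_iff w_pos that unfolding level_def by blast
  have single: "h j + w j * e \<le> t \<longleftrightarrow> level t j + e \<le> 0" if "j \<in> {1..m}" for j e
    using weighted_le_iff[of "w j" e "h j" t] w_pos that unfolding level_def by (simp add: add.commute)
  have "\<theta> \<le> t \<longleftrightarrow> (\<forall>j\<in>{1..m}. \<forall>l\<in>{1..m}.
      (w l / (w j + w l)) * h j + (w j / (w j + w l)) * h l
        + (w j * w l / (w j + w l)) * mp_inner (mp_conj (site j)) (mat_col ?B (site l)) \<le> t
      \<and> h j + w j * mp_inner (mp_conj (site j)) (mat_col ?B s) \<le> t
      \<and> h l + w l * mp_inner tm (mat_col ?B (site l)) \<le> t)"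
    using m_ge_1 by (simp add: \<theta>_def)
  then show ?thesis
    using pair single m_ge_1 by auto
qed

lemma level_solution_exists_iff:
  assumes "mp_inner tm (mat_col (Bstar a b) s) \<le> 0"
  shows "(\<exists>y. level_solution t y) \<longleftrightarrow> \<theta> \<le> t"
  unfolding level_solution_def theta_le_iff upper_lower_le_0_iff[OF assms, symmetric]
  by (rule kleene_star_fixpoint_exists_iff[OF Bstar_is_kleene_star[OF a_le_b]])

lemma sublevel_nonempty_iff:
  assumes "mp_inner tm (mat_col (Bstar a b) s) \<le> 0"
  shows "(\<exists>x\<in>feasible m p1 p2 d f1 g1 f2 g2 a b. objective m p1 p2 w h x \<le> t) \<longleftrightarrow> \<theta> \<le> t"
proof -
  have "(\<exists>x\<in>feasible m p1 p2 d f1 g1 f2 g2 a b. objective m p1 p2 w h x \<le> t) \<longleftrightarrow>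
      (\<exists>x. level_solution t (rotate_coords x))"
    using sublevel_iff_level_solution by blast
  also have "\<dots> \<longleftrightarrow> (\<exists>y. level_solution t y)"
    using surj_rotate_coords by (metis surjD)
  finally show ?thesis
    using level_solution_exists_iff[OF assms] by blast
qed

lemma sublevel_set_eq:
  "{x \<in> feasible m p1 p2 d f1 g1 f2 g2 a b. objective m p1 p2 w h x \<le> t} =
    {x. \<exists>u. vle (lower t) u \<and> vle u (mp_conj (row_mat (upper t) (Bstar a b)))
          \<and> rotate_coords x = mat_col (Bstar a b) u}"
  using sublevel_iff_level_solution[of _ t] kleene_star_fixpoint_iff[OF Bstar_is_kleene_star[OF a_le_b]]
  unfolding level_solution_def by blast

end

theorem theorem4:
  fixes m :: nat and p1 p2 w d h :: "nat \<Rightarrow> real"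
    and f1 g1 f2 g2 a b :: real
  assumes hm: "m \<ge> 1"
    and hw: "\<forall>j\<in>{1..m}. w j > 0"
    and hd: "\<forall>j\<in>{1..m}. d j > 0"
    and hf1: "f1 \<le> g1" and hf2: "f2 \<le> g2" and hab: "a \<le> b"
  defines "oo \<equiv> (\<lambda>j. (p1 j + p2 j, - p1 j + p2 j))"
  defines "s \<equiv> mp_bigadd m (\<lambda>j. mp_scal (- d j) (oo j)) \<oplus>\<^sub>v (f1, f2)"
  defines "tm \<equiv> mp_bigadd m (\<lambda>j. mp_scal (- d j) (mp_conj (oo j))) \<oplus>\<^sub>v mp_conj (g1, g2)"
  assumes hcond: "mp_inner tm (mat_col (Bstar a b) s) \<le> 0"
  defines "\<theta> \<equiv> Max ((\<lambda>(j, l).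
              max (max ((w l / (w j + w l)) * h j + (w j / (w j + w l)) * h l
                        + (w j * w l / (w j + w l)) * mp_inner (mp_conj (oo j)) (mat_col (Bstar a b) (oo l)))
                       (h j + w j * mp_inner (mp_conj (oo j)) (mat_col (Bstar a b) s)))
                  (h l + w l * mp_inner tm (mat_col (Bstar a b) (oo l))))
            ` ({1..m} \<times> {1..m}))"
  defines "q \<equiv> mp_bigadd m (\<lambda>j. mp_scal ((- 1 / w j) * \<theta> + (1 / w j) * h j) (oo j))"
  defines "rm \<equiv> mp_bigadd m (\<lambda>j. mp_scal ((- 1 / w j) * \<theta> + (1 / w j) * h j) (mp_conj (oo j)))"
  shows "\<theta> \<in> objective m p1 p2 w h ` feasible m p1 p2 d f1 g1 f2 g2 a b
       \<and> (\<forall>x\<in>feasible m p1 p2 d f1 g1 f2 g2 a b. \<theta> \<le> objective m p1 p2 w h x)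
       \<and> {x \<in> feasible m p1 p2 d f1 g1 f2 g2 a b. objective m p1 p2 w h x = \<theta>} =
         {x. \<exists>u y. vle (q \<oplus>\<^sub>v s) u
                 \<and> vle u (mp_conj (row_mat (rm \<oplus>\<^sub>v tm) (Bstar a b)))
                 \<and> y = mat_col (Bstar a b) u
                 \<and> fst x = (1/2) * fst y + (- 1/2) * snd y
                 \<and> snd x = (1/2) * fst y + (1/2) * snd y}"
proof -
  interpret P: maxplus_location m p1 p2 w d h f1 g1 f2 g2 a b
    using hm hw hab by unfold_locales
  have site: "oo = P.site"
    by (simp add: oo_def P.site_def fun_eq_iff)
  have vectors: "s = P.s" "tm = P.tm"
    by (simp_all add: s_def tm_def P.s_def P.tm_def site)
  have theta: "\<theta> = P.\<theta>"
    unfolding \<theta>_def P.\<theta>_def site vectors ..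
  have bounds: "q \<oplus>\<^sub>v s = P.lower \<theta>" "rm \<oplus>\<^sub>v tm = P.upper \<theta>"
    by (simp_all add: q_def rm_def P.lower_def P.upper_def P.level_def site vectors)
  have threshold: "(\<exists>x\<in>feasible m p1 p2 d f1 g1 f2 g2 a b. objective m p1 p2 w h x \<le> t) \<longleftrightarrow> \<theta> \<le> t"
    for t
    using P.sublevel_nonempty_iff hcond by (simp add: theta vectors)
  note minimum = sublevel_threshold_minimum[OF threshold]
  show ?thesis
    using minimum P.sublevel_set_eq[of \<theta>] unfolding bounds rotate_coords_eq_iff by auto
qed

end
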